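(* Let $k\ge1$, $m=2k$, and $R_m^+(\hat K)=P_m(\hat K)+\mathrm{span}\{\hat x^m\hat y,\ \hat x\hat y^m\}$. If $\hat v\in R_m^+(\hat K)$ vanishes at all points of $G^+\cup I^+\cup\{(1,1)\}$, then $\hat v\equiv 0$.
   Context: $\hat K=[-1,1]^2$; $P_n(\hat K)$ is the space of polynomials of total degree $\le n$. Let $g_{\pm1},\dots,g_{\pm k}$ be the $2k$ zeros of the Legendre polynomial of degree $2k$ on $[-1,1]$ ($g_{-i}=-g_i$). $G^+=\{(1,g_i),(-1,g_i),(g_i,1),(g_i,-1): i\in\{-k,\dots,k\}\setminus\{0\}\}$. $I^+$ is a set of $(2k-3)(k-1)$ interior points of $\hat K$ unisolvent for $P_{2k-4}(\hat K)$ (every polynomial in $P_{2k-4}(\hat K)$ is uniquely determined by its values on $I^+$); $I^+=\emptyset$ when $k=1$. *)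

theory Defs
  imports "HOL-Analysis.Analysis" "HOL-Computational_Algebra.Polynomial"
begin

fun legendre :: "nat \<Rightarrow> real poly" where
  "legendre 0 = 1"
| "legendre (Suc 0) = [:0, 1:]"
| "legendre (Suc (Suc n)) =
     smult (1 / real (n + 2))
       (smult (real (2 * n + 3)) ([:0, 1:] * legendre (Suc n)) - smult (real (n + 1)) (legendre n))"

definition P2 :: "nat \<Rightarrow> (real \<times> real \<Rightarrow> real) set" where
  "P2 n = {f. \<exists>c :: nat \<Rightarrow> nat \<Rightarrow> real.
              f = (\<lambda>(x, y). \<Sum>i\<le>n. \<Sum>j\<le>n - i. c i j * x ^ i * y ^ j)}"

definition Rplus :: "nat \<Rightarrow> (real \<times> real \<Rightarrow> real) set" where
  "Rplus m = {f. \<exists>p \<in> P2 m. \<exists>a b :: real.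
              f = (\<lambda>(x, y). p (x, y) + a * x ^ m * y + b * x * y ^ m)}"

definition gauss_pts :: "nat \<Rightarrow> real set" where
  "gauss_pts k = {g. poly (legendre (2 * k)) g = 0}"

definition Gplus :: "nat \<Rightarrow> (real \<times> real) set" where
  "Gplus k = (\<Union>g \<in> gauss_pts k. {(1, g), (-1, g), (g, 1), (g, -1)})"

definition admissible_I :: "nat \<Rightarrow> (real \<times> real) set \<Rightarrow> bool" where
  "admissible_I k I \<longleftrightarrow>
     (if k = 1 then I = {}
      else finite I \<and> card I = (2 * k - 3) * (k - 1)
         \<and> (\<forall>(x, y) \<in> I. -1 < x \<and> x < 1 \<and> -1 < y \<and> y < 1)
         \<and> (\<forall>p \<in> P2 (2 * k - 4). \<forall>q \<in> P2 (2 * k - 4).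
               (\<forall>z \<in> I. p z = q z) \<longrightarrow> p = q))"

end

theory Submission
  imports Defs
begin

text \<open>
  On each edge of the square, an element of \<open>R\<^sub>m\<^sup>+\<close> restricts to a polynomial of degree
  at most \<open>m = 2k\<close>. The Gauss points are the zeros of the Legendre polynomial \<open>P\<^sub>2\<^sub>k\<close>;
  by the classical interlacing argument based on Bonnet's recurrence these are \<open>2k\<close> distinct
  points of \<open>(-1, 1)\<close>, so together with one vertex they force the restriction to vanish. The
  vertex \<open>(1, 1)\<close> settles the edges \<open>x = 1\<close> and \<open>y = 1\<close>, and these in turn supply the
  vertices needed for the opposite edges. Hence \<open>v = (x\<^sup>2 - 1)(y\<^sup>2 - 1) q\<close>. Comparing
  coefficients of top total degree shows that the extra monomials \<open>x\<^sup>m y\<close>, \<open>x y\<^sup>m\<close> cannot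
  occur in such a product, so \<open>q\<close> has total degree at most \<open>2k - 4\<close>; as it vanishes on the
  unisolvent set \<open>I\<^sup>+\<close>, it is zero.
\<close>

section \<open>Legendre polynomials and their zeros\<close>

lemma poly_legendre_Suc_Suc:
  "poly (legendre (Suc (Suc n))) t =
     (real (2 * n + 3) * t * poly (legendre (Suc n)) t - real (n + 1) * poly (legendre n) t) / real (n + 2)"
  by (simp add: field_simps)

lemma poly_legendre_one: "poly (legendre n) 1 = 1"
  by (induction n rule: legendre.induct) (auto simp: poly_legendre_Suc_Suc simp del: legendre.simps(3))

lemma poly_legendre_minus_one: "poly (legendre n) (-1) = (-1) ^ n"
  by (induction n rule: legendre.induct) (auto simp: poly_legendre_Suc_Suc field_simps simp del: legendre.simps(3))

lemma degree_legendre: "degree (legendre n) = n"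
proof (induction n rule: legendre.induct)
  case (3 n)
  let ?A = "smult (real (2 * n + 3)) ([:0, 1:] * legendre (Suc n))"
  and ?B = "smult (real (n + 1)) (legendre n)"
  have "legendre (Suc n) \<noteq> 0"
    using "3.IH"(1) by auto
  then have "degree ?A = Suc (Suc n)"
    using "3.IH"(1) by (simp add: degree_mult_eq)
  moreover have "degree ?B < Suc (Suc n)"
    using "3.IH"(2) by simp
  ultimately have "degree (?A - ?B) = Suc (Suc n)"
    by (metis degree_add_eq_left degree_minus diff_conv_add_uminus)
  then show ?case
    by (simp only: legendre.simps degree_smult_eq) simp
qed auto

lemma lead_coeff_legendre_pos: "lead_coeff (legendre n) > 0"
proof (induction n rule: legendre.induct)
  case (3 n)
  have "coeff (legendre n) (Suc (Suc n)) = 0"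
    by (simp add: coeff_eq_0 degree_legendre)
  then have "coeff (legendre (Suc (Suc n))) (Suc (Suc n))
      = real (2 * n + 3) / real (n + 2) * coeff (legendre (Suc n)) (Suc n)"
    by (simp only: legendre.simps coeff_smult coeff_diff mult_pCons_left coeff_pCons_Suc) simp
  with 3 show ?case
    by (simp only: degree_legendre) simp
qed auto

lemma sign_prod_diff:
  fixes r :: "nat \<Rightarrow> real"
  assumes "j \<le> n" "\<And>i. i < j \<Longrightarrow> r i < y" "\<And>i. j \<le> i \<Longrightarrow> i < n \<Longrightarrow> y < r i"
  shows "(-1) ^ (n - j) * (\<Prod>i<n. y - r i) > 0"
  using assms
proof (induction n)
  case (Suc n)
  show ?case
  proof (cases "j \<le> n")
    case True
    with Suc have "(-1) ^ (n - j) * (\<Prod>i<n. y - r i) > 0" "y < r n"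
      by auto
    moreover have "Suc n - j = Suc (n - j)"
      using True by simp
    ultimately show ?thesis
      by (simp add: mult_ac mult_neg_pos)
  next
    case False
    with Suc.prems have "j = Suc n" "(\<Prod>i<n. y - r i) > 0" "y > r n"
      by (auto intro!: prod_pos)
    then show ?thesis
      by simp
  qed
qed simp

lemma poly_eq_smult_prod_roots:
  fixes p :: "'a::idom poly"
  assumes "degree p \<le> n" "inj_on r {..<n}" "\<And>i. i < n \<Longrightarrow> poly p (r i) = 0"
  shows "p = smult (coeff p n) (\<Prod>i<n. [:- r i, 1:])"
proof (rule poly_eqI_degree_lead_coeff[where A = "r ` {..<n}"])
  have deg: "degree (\<Prod>i<n. [:- r i, 1:]) = n"
    by (simp add: degree_prod_eq_sum_degree)
  have "lead_coeff (\<Prod>i<n. [:- r i, 1:]) = 1"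
    by (simp add: lead_coeff_prod)
  with deg show "coeff p n = coeff (smult (coeff p n) (\<Prod>i<n. [:- r i, 1:])) n"
    "degree (smult (coeff p n) (\<Prod>i<n. [:- r i, 1:])) \<le> n"
    by simp_all
qed (use assms in \<open>auto simp: card_image poly_prod\<close>)

lemma sign_poly_between_roots:
  fixes p :: "real poly"
  assumes "degree p = n" "lead_coeff p > 0" "inj_on r {..<n}" "\<And>i. i < n \<Longrightarrow> poly p (r i) = 0"
    and "j \<le> n" "\<And>i. i < j \<Longrightarrow> r i < y" "\<And>i. j \<le> i \<Longrightarrow> i < n \<Longrightarrow> y < r i"
  shows "(-1) ^ (n - j) * poly p y > 0"
proof -
  have "p = smult (coeff p n) (\<Prod>i<n. [:- r i, 1:])"
    by (rule poly_eq_smult_prod_roots) (use assms in auto)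
  then have "poly p y = poly (smult (coeff p n) (\<Prod>i<n. [:- r i, 1:])) y"
    by (rule arg_cong)
  also have "\<dots> = coeff p n * (\<Prod>i<n. y - r i)"
    by (simp add: poly_prod)
  finally have eq: "poly p y = coeff p n * (\<Prod>i<n. y - r i)" .
  have "coeff p n * ((-1) ^ (n - j) * (\<Prod>i<n. y - r i)) > 0"
  proof (rule mult_pos_pos)
    show "coeff p n > 0"
      using assms(1,2) by simp
    show "(-1) ^ (n - j) * (\<Prod>i<n. y - r i) > 0"
      by (rule sign_prod_diff) (use assms in auto)
  qed
  with eq show ?thesis
    by (simp add: mult.left_commute)
qed

lemma roots_between_sign_changes:
  fixes p :: "real poly"
  assumes e: "strict_mono_on {..N} e"
    and sign: "\<And>t. t \<le> N \<Longrightarrow> (-1) ^ (N - t) * poly p (e t) > 0"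
  obtains s where "strict_mono_on {..<N} s"
    "\<And>j. j < N \<Longrightarrow> e j < s j \<and> s j < e (Suc j) \<and> poly p (s j) = 0"
proof -
  have "\<exists>x. e j < x \<and> x < e (Suc j) \<and> poly p x = 0" if "j < N" for j
  proof -
    have "N - j = Suc (N - Suc j)"
      using that by simp
    then have "(-1) ^ (N - j) = - ((-1) ^ (N - Suc j) :: real)"
      by simp
    then have "((-1) ^ (N - Suc j) * poly p (e (Suc j))) * ((-1) ^ (N - j) * poly p (e j))
        = - (poly p (e j) * poly p (e (Suc j)))"
      by (simp add: algebra_simps)
    moreover have "0 < ((-1) ^ (N - Suc j) * poly p (e (Suc j))) * ((-1) ^ (N - j) * poly p (e j))"
      using that by (intro mult_pos_pos sign) auto
    ultimately have "poly p (e j) * poly p (e (Suc j)) < 0"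
      by linarith
    moreover have "e j < e (Suc j)"
      using that by (intro strict_mono_onD[OF e]) auto
    ultimately show ?thesis
      using poly_IVT by blast
  qed
  then obtain s where s: "\<And>j. j < N \<Longrightarrow> e j < s j \<and> s j < e (Suc j) \<and> poly p (s j) = 0"
    by metis
  have "strict_mono_on {..<N} s"
  proof (rule strict_mono_onI)
    fix i j assume "i \<in> {..<N}" "j \<in> {..<N}" "i < j"
    then have "s i < e (Suc i)" "e (Suc i) \<le> e j" "e j < s j"
      using s by (auto intro: strict_mono_on_leD[OF e])
    then show "s i < s j"
      by linarith
  qed
  with s show thesis
    using that by blast
qed

lemma poly_legendre_Suc_Suc_at_root:
  assumes "poly (legendre (Suc n)) t = 0"
  shows "poly (legendre (Suc (Suc n))) t = - (real (n + 1) / real (n + 2)) * poly (legendre n) t"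
  using assms by (simp add: poly_legendre_Suc_Suc)

lemma legendre_sign_pattern:
  fixes r :: "nat \<Rightarrow> real" and n :: nat
  defines "e t \<equiv> if t = 0 then -1 else if t = Suc (Suc n) then 1 else r (t - 1)"
  assumes r_mono: "strict_mono_on {..n} r"
    and r: "\<And>i. i \<le> n \<Longrightarrow> -1 < r i \<and> r i < 1 \<and> poly (legendre (Suc n)) (r i) = 0 \<and>
              (-1) ^ (n - i) * poly (legendre n) (r i) > 0"
  shows "strict_mono_on {..Suc (Suc n)} e"
    and "t \<le> Suc (Suc n) \<Longrightarrow> (-1) ^ (Suc (Suc n) - t) * poly (legendre (Suc (Suc n))) (e t) > 0"
proof -
  show "strict_mono_on {..Suc (Suc n)} e"
  proof (rule strict_mono_onI)
    fix a b assume "a \<in> {..Suc (Suc n)}" "b \<in> {..Suc (Suc n)}" "a < b"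
    then show "e a < e b"
      using r[of "a - 1"] r[of "b - 1"] strict_mono_onD[OF r_mono, of "a - 1" "b - 1"]
      by (auto simp: e_def)
  qed
  assume "t \<le> Suc (Suc n)"
  then consider "t = 0" | "t = Suc (Suc n)" | i where "i \<le> n" "t = Suc i"
    by (metis le_SucE not0_implies_Suc Suc_le_mono)
  then show "(-1) ^ (Suc (Suc n) - t) * poly (legendre (Suc (Suc n))) (e t) > 0"
  proof cases
    case 1
    then show ?thesis
      by (simp add: e_def poly_legendre_minus_one del: legendre.simps flip: power_mult_distrib)
  next
    case 2
    then show ?thesis
      by (simp add: e_def poly_legendre_one del: legendre.simps)
  next
    case (3 i)
    then have "(-1) ^ (Suc (Suc n) - t) * poly (legendre (Suc (Suc n))) (e t)
        = real (n + 1) / real (n + 2) * ((-1) ^ (n - i) * poly (legendre n) (r i))"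
      using r[of i] by (simp add: e_def poly_legendre_Suc_Suc_at_root Suc_diff_le del: legendre.simps)
    then show ?thesis
      using r[of i] \<open>i \<le> n\<close> by simp
  qed
qed

lemma legendre_roots_interlace:
  "\<exists>r. strict_mono_on {..n} r \<and>
     (\<forall>i\<le>n. -1 < r i \<and> r i < 1 \<and> poly (legendre (Suc n)) (r i) = 0 \<and>
              (-1) ^ (n - i) * poly (legendre n) (r i) > 0)"
proof (induction n)
  case 0
  show ?case
    by (rule exI[of _ "\<lambda>_. 0"]) (auto intro: strict_mono_onI)
next
  case (Suc n)
  then obtain r where r_mono: "strict_mono_on {..n} r"
    and r: "\<And>i. i \<le> n \<Longrightarrow> -1 < r i \<and> r i < 1 \<and> poly (legendre (Suc n)) (r i) = 0 \<and>
              (-1) ^ (n - i) * poly (legendre n) (r i) > 0"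
    by blast
  define e where "e t = (if t = 0 then -1 else if t = Suc (Suc n) then 1 else r (t - 1))" for t
  note sign_pattern = legendre_sign_pattern[OF r_mono r, folded e_def]
  obtain s where s_mono: "strict_mono_on {..<Suc (Suc n)} s" and s: "\<And>j. j < Suc (Suc n) \<Longrightarrow>
      e j < s j \<and> s j < e (Suc j) \<and> poly (legendre (Suc (Suc n))) (s j) = 0"
    using roots_between_sign_changes[OF sign_pattern] by blast
  have "(-1) ^ (Suc n - j) * poly (legendre (Suc n)) (s j) > 0" if "j \<le> Suc n" for j
  proof (rule sign_poly_between_roots[OF degree_legendre lead_coeff_legendre_pos])
    show "inj_on r {..<Suc n}"
      using strict_mono_on_imp_inj_on[OF r_mono] by (simp add: lessThan_Suc_atMost)
    show "r i < s j" if "i < j" for i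
      using s[of j] strict_mono_on_leD[OF sign_pattern(1), of "Suc i" j] that \<open>j \<le> Suc n\<close>
      by (simp add: e_def)
    show "s j < r i" if "j \<le> i" "i < Suc n" for i
      using s[of j] strict_mono_on_leD[OF sign_pattern(1), of "Suc j" "Suc i"] that
      by (simp add: e_def)
  qed (use r that in auto)
  moreover have "-1 < s j \<and> s j < 1" if "j \<le> Suc n" for j
    using s[of j] strict_mono_on_leD[OF sign_pattern(1), of 0 j]
      strict_mono_on_leD[OF sign_pattern(1), of "Suc j" "Suc (Suc n)"] that
    by (simp add: e_def)
  ultimately show ?case
    using s_mono s by (intro exI[of _ s] conjI allI impI) (simp_all add: lessThan_Suc_atMost less_Suc_eq_le)
qed

lemma legendre_root_set:
  obtains r where "inj_on r {..<n}" "r ` {..<n} \<subseteq> {-1<..<1}"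
    "{t. poly (legendre n) t = 0} = r ` {..<n}"
proof (cases n)
  case 0
  then show ?thesis
    using that[of id] by simp
next
  case (Suc m)
  obtain r where r_mono: "strict_mono_on {..m} r"
    and r: "\<forall>i\<le>m. -1 < r i \<and> r i < 1 \<and> poly (legendre (Suc m)) (r i) = 0 \<and>
              (-1) ^ (m - i) * poly (legendre m) (r i) > 0"
    using legendre_roots_interlace[of m] by blast
  have range: "r ` {..<n} \<subseteq> {-1<..<1}" and roots: "r ` {..<n} \<subseteq> {t. poly (legendre n) t = 0}"
    using r Suc by (auto simp: lessThan_Suc_atMost)
  have "inj_on r {..<n}"
    using strict_mono_on_imp_inj_on[OF r_mono] Suc by (simp add: lessThan_Suc_atMost)
  moreover have "legendre n \<noteq> 0"
    using degree_legendre[of n] Suc by auto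
  then have "finite {t. poly (legendre n) t = 0}"
    "card {t. poly (legendre n) t = 0} \<le> card (r ` {..<n})"
    using card_poly_roots_bound[of "legendre n"] \<open>inj_on r {..<n}\<close>
    by (simp_all add: poly_roots_finite degree_legendre card_image)
  ultimately show ?thesis
    using that range card_seteq[OF _ roots] by blast
qed

lemma finite_gauss_pts: "finite (gauss_pts k)"
  by (metis legendre_root_set finite_lessThan finite_imageI gauss_pts_def)

lemma card_gauss_pts: "card (gauss_pts k) = 2 * k"
  by (metis legendre_root_set card_image card_lessThan gauss_pts_def)

lemma gauss_pts_bounds: "g \<in> gauss_pts k \<Longrightarrow> -1 < g \<and> g < 1"
  by (metis legendre_root_set gauss_pts_def greaterThanLessThan_iff subsetD)

lemma poly_eq_0_if_vanishes_on_gauss_pts: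
  fixes f :: "real poly"
  assumes "degree f \<le> 2 * k" "\<And>g. g \<in> gauss_pts k \<Longrightarrow> poly f g = 0"
    and "c = 1 \<or> c = -1" "poly f c = 0"
  shows "f = 0"
proof (rule poly_eqI_degree[where A = "insert c (gauss_pts k)"])
  have "c \<notin> gauss_pts k"
    using gauss_pts_bounds assms(3) by force
  then have "card (insert c (gauss_pts k)) = Suc (2 * k)"
    by (simp add: finite_gauss_pts card_gauss_pts)
  then show "degree f < card (insert c (gauss_pts k))" "degree 0 < card (insert c (gauss_pts k))"
    using assms(1) by simp_all
qed (use assms in auto)

section \<open>Bivariate polynomials\<close>

text \<open>A bivariate polynomial is a polynomial in \<open>x\<close> whose coefficients are polynomials in \<open>y\<close>.\<close>

definition poly2 :: "'a::comm_semiring_1 poly poly \<Rightarrow> 'a \<times> 'a \<Rightarrow> 'a" where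
  "poly2 V = (\<lambda>(x, y). poly (poly V [:x:]) y)"

lemma poly2_add [simp]: "poly2 (V + W) z = poly2 V z + poly2 W z"
  and poly2_monom [simp]: "poly2 (monom (monom c j) i) (x, y) = c * x ^ i * y ^ j"
  by (auto simp: poly2_def poly_monom poly_const_pow mult_ac split: prod.splits)

lemma poly2_sum: "poly2 (sum f S) z = (\<Sum>i\<in>S. poly2 (f i) z)"
  by (cases z) (simp add: poly2_def poly_sum)

lemma poly2_eq_poly_map_poly: "poly2 V (x, y) = poly (map_poly (\<lambda>q. poly q y) V) x"
  unfolding poly2_def by (induction V rule: pCons_induct) (auto simp: map_poly_pCons)

lemma coeff_poly_const: "coeff (poly V [:x:]) j = poly (map_poly (\<lambda>q. coeff q j) V) x"
  by (induction V rule: pCons_induct) (auto simp: map_poly_pCons)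

lemma degree_poly_const_le:
  assumes "\<And>i. degree (coeff V i) \<le> n"
  shows "degree (poly V [:x:]) \<le> n"
proof (rule degree_le, intro allI impI)
  fix j assume "n < j"
  then have "map_poly (\<lambda>q. coeff q j) V = 0"
    using assms by (intro poly_eqI) (simp add: coeff_map_poly, metis coeff_eq_0 le_less_trans)
  then show "coeff (poly V [:x:]) j = 0"
    by (simp add: coeff_poly_const)
qed

lemma Rplus_poly2E:
  assumes "f \<in> Rplus m"
  obtains V where "f = poly2 V"
    "\<And>i j. coeff (coeff V i) j \<noteq> 0 \<Longrightarrow> i + j \<le> m \<or> (i, j) = (m, 1) \<or> (i, j) = (1, m)"
proof -
  obtain c a b where f: "f = (\<lambda>(x, y). (\<Sum>i\<le>m. \<Sum>j\<le>m - i. c i j * x ^ i * y ^ j)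
      + a * x ^ m * y + b * x * y ^ m)"
    using assms unfolding Rplus_def P2_def by auto
  define V where "V = (\<Sum>i\<le>m. \<Sum>j\<le>m - i. monom (monom (c i j) j) i)
      + monom (monom a 1) m + monom (monom b m) 1"
  have "f = poly2 V"
    by (auto simp: f V_def poly2_sum mult_ac)
  moreover have "i + j \<le> m \<or> (i, j) = (m, 1) \<or> (i, j) = (1, m)"
    if "coeff (coeff V i) j \<noteq> 0" for i j
  proof (rule ccontr)
    assume "\<not> ?thesis"
    then have "coeff (coeff V i) j = 0"
      by (auto simp: V_def coeff_sum intro!: sum.neutral)
    with that show False
      by simp
  qed
  ultimately show thesis
    using that by blast
qed

lemma square_minus_one_dvdI:
  fixes p :: "'a::{idom, ring_char_0} poly"
  assumes "poly p 1 = 0" "poly p (-1) = 0"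
  shows "[:-1, 0, 1:] dvd p"
proof -
  obtain q where q: "p = [:-1, 1:] * q"
    using assms(1) by (auto simp: poly_eq_0_iff_dvd)
  then have "poly q (-1) = 0"
    using assms(2) by simp
  then obtain q' where "q = [:1, 1:] * q'"
    by (auto simp: poly_eq_0_iff_dvd)
  with q have "p = [:-1, 0, 1:] * q'"
    by (simp add: mult.assoc[symmetric])
  then show ?thesis
    by (rule dvdI)
qed

lemma poly2_boundary_factor_eq:
  fixes Q :: "'a::comm_ring_1 poly poly"
  shows "poly2 ([:-1, 0, 1:] * smult [:-1, 0, 1:] Q) (x, y) = (x\<^sup>2 - 1) * (y\<^sup>2 - 1) * poly2 Q (x, y)"
  by (simp add: poly2_def power2_eq_square algebra_simps poly_minus)

lemma poly2_boundary_factorE: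
  fixes V :: "'a::field_char_0 poly poly"
  assumes zero: "\<And>x y. x \<in> {-1, 1} \<or> y \<in> {-1, 1} \<Longrightarrow> poly2 V (x, y) = 0"
  obtains Q where "V = [:-1, 0, 1:] * smult [:-1, 0, 1:] Q"
proof -
  let ?X2 = "[:-1, 0, 1:] :: 'a poly"
  have "poly V [:c:] = 0" if "c \<in> {-1, 1}" for c
    unfolding poly_all_0_iff_0[symmetric] using zero[of c] that by (auto simp: poly2_def)
  then have "[:-1, 0, 1:] dvd V"
    by (intro square_minus_one_dvdI) (auto simp: one_pCons)
  then obtain W where VW: "V = [:-1, 0, 1:] * W"
    by (elim dvdE)
  have "poly (coeff W i) y = 0" if "y \<in> {-1, 1}" for i y
  proof -
    let ?g = "map_poly (\<lambda>q. poly q y) W"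
    have "poly (?X2 * ?g) x = poly2 V (x, y)" for x
      by (simp add: VW poly2_eq_poly_map_poly[symmetric]) (simp add: poly2_def)
    then have "?X2 * ?g = 0"
      using zero that by (simp add: poly_all_0_iff_0[symmetric])
    then have "?g = 0"
      by (simp only: mult_eq_0_iff) simp
    then show ?thesis
      by (metis coeff_0 coeff_map_poly poly_0)
  qed
  then have dvd: "?X2 dvd coeff W i" for i
    by (intro square_minus_one_dvdI) auto
  have "W = smult ?X2 (map_poly (\<lambda>q. q div ?X2) W)"
    by (rule poly_eqI) (simp only: coeff_smult coeff_map_poly div_0 dvd_mult_div_cancel[OF dvd])
  with VW show thesis
    using that by metis
qed

lemma coeff_coeff_boundary_factor:
  fixes Q :: "'a::comm_ring_1 poly poly"
  shows "coeff (coeff ([:-1, 0, 1:] * smult [:-1, 0, 1:] Q) (Suc (Suc i))) (Suc (Suc j)) =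
    coeff (coeff Q i) j - coeff (coeff Q (i + 2)) j - coeff (coeff Q i) (j + 2)
      + coeff (coeff Q (i + 2)) (j + 2)"
  by (simp add: mult_pCons_left coeff_pCons algebra_simps)

lemma boundary_factor_total_degree:
  fixes Q :: "'a::comm_ring_1 poly poly"
  assumes supp: "\<And>i j. coeff (coeff ([:-1, 0, 1:] * smult [:-1, 0, 1:] Q) i) j \<noteq> 0 \<Longrightarrow>
      i + j \<le> m \<or> (i, j) = (m, 1) \<or> (i, j) = (1, m)"
    and nz: "coeff (coeff Q i) j \<noteq> 0"
  shows "i + j + 4 \<le> m"
proof -
  define S where "S = {i + j | i j. coeff (coeff Q i) j \<noteq> 0}"
  have "s \<le> degree Q + (\<Sum>i\<le>degree Q. degree (coeff Q i))" if "s \<in> S" for s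
  proof -
    obtain i j where ij: "s = i + j" "coeff (coeff Q i) j \<noteq> 0"
      using \<open>s \<in> S\<close> by (auto simp: S_def)
    then have "i \<le> degree Q" "j \<le> degree (coeff Q i)"
      by (auto intro: le_degree)
    moreover have "degree (coeff Q i) \<le> (\<Sum>i\<le>degree Q. degree (coeff Q i))"
      using \<open>i \<le> degree Q\<close> by (intro member_le_sum) auto
    ultimately show ?thesis
      using ij by linarith
  qed
  then have "finite S"
    by (meson finite_nat_set_iff_bounded_le)
  moreover have "i + j \<in> S"
    using nz by (auto simp: S_def)
  ultimately have "Max S \<in> S" and le_Max: "i + j \<le> Max S"
    by (auto intro: Max_in)
  then obtain i0 j0 where top: "Max S = i0 + j0" "coeff (coeff Q i0) j0 \<noteq> 0"
    by (auto simp: S_def)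
  have "coeff (coeff Q i') j' = 0" if "i0 + j0 < i' + j'" for i' j'
    using Max_ge[OF \<open>finite S\<close>, of "i' + j'"] that top(1) by (auto simp: S_def)
  \<comment> \<open>at the top total degree, only the leading term of the factor contributes\<close>
  then have "coeff (coeff ([:-1, 0, 1:] * smult [:-1, 0, 1:] Q) (Suc (Suc i0))) (Suc (Suc j0)) \<noteq> 0"
    using top(2) by (simp add: coeff_coeff_boundary_factor)
  then have "i0 + j0 + 4 \<le> m"
    using supp by fastforce
  with le_Max top(1) show ?thesis
    by linarith
qed

lemma poly2_in_P2:
  fixes Q :: "real poly poly"
  assumes supp: "\<And>i j. coeff (coeff Q i) j \<noteq> 0 \<Longrightarrow> i + j \<le> n"
  shows "poly2 Q \<in> P2 n"
proof -
  define S where "S = (\<Sum>i\<le>n. \<Sum>j\<le>n - i. monom (monom (coeff (coeff Q i) j) j) i)"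
  have "Q = S"
  proof (intro poly_eqI)
    fix a b
    have "coeff S a
        = (\<Sum>i\<le>n. if i = a then \<Sum>j\<le>n - i. monom (coeff (coeff Q i) j) j else 0)"
      unfolding S_def coeff_sum coeff_monom by (intro sum.cong) auto
    also have "\<dots> = (if a \<le> n then \<Sum>j\<le>n - a. monom (coeff (coeff Q a) j) j else 0)"
      by (simp add: sum.delta')
    finally show "coeff (coeff Q a) b = coeff (coeff S a) b"
      using supp[of a b] by (cases "coeff (coeff Q a) b = 0") (auto simp: coeff_sum)
  qed
  moreover have "poly2 S (x, y) = (\<Sum>i\<le>n. \<Sum>j\<le>n - i. coeff (coeff Q i) j * x ^ i * y ^ j)" for x y
    by (simp add: S_def poly2_sum)
  ultimately have "poly2 Q = (\<lambda>(x, y). \<Sum>i\<le>n. \<Sum>j\<le>n - i. coeff (coeff Q i) j * x ^ i * y ^ j)"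
    by (auto simp: fun_eq_iff)
  then show ?thesis
    unfolding P2_def by (intro CollectI exI[of _ "\<lambda>i j. coeff (coeff Q i) j"])
qed

lemma poly2_zero_on_square_boundary:
  fixes V :: "real poly poly"
  assumes deg: "degree V \<le> 2 * k" "\<And>i. degree (coeff V i) \<le> 2 * k"
    and zero: "\<And>z. z \<in> Gplus k \<union> {(1, 1)} \<Longrightarrow> poly2 V z = 0"
    and edge: "x \<in> {-1, 1} \<or> y \<in> {-1, 1}"
  shows "poly2 V (x, y) = 0"
proof -
  define vert where "vert c = poly V [:c:]" for c
  define horz where "horz c = map_poly (\<lambda>q. poly q c) V" for c
  have poly_vert: "poly (vert c) t = poly2 V (c, t)" for c t
    by (simp add: vert_def poly2_def)
  have poly_horz: "poly (horz c) t = poly2 V (t, c)" for c t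
    by (simp add: horz_def poly2_eq_poly_map_poly)
  have deg_vert: "degree (vert c) \<le> 2 * k" for c
    unfolding vert_def using deg(2) by (rule degree_poly_const_le)
  have deg_horz: "degree (horz c) \<le> 2 * k" for c
    unfolding horz_def using deg(1) map_poly_degree_leq le_trans by blast
  have gauss: "poly2 V (c, g) = 0 \<and> poly2 V (g, c) = 0" if "c \<in> {-1, 1}" "g \<in> gauss_pts k" for c g
    using zero that unfolding Gplus_def by blast
  have vert_1: "vert 1 = 0"
    by (rule poly_eq_0_if_vanishes_on_gauss_pts[OF deg_vert, of _ 1]) (auto simp: poly_vert gauss zero)
  have horz_1: "horz 1 = 0"
    by (rule poly_eq_0_if_vanishes_on_gauss_pts[OF deg_horz, of _ 1]) (auto simp: poly_horz gauss zero)
  \<comment> \<open>the corners (-1, 1) and (1, -1) lie on the edges already shown to vanish\<close>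
  have "poly2 V (-1, 1) = 0" "poly2 V (1, -1) = 0"
    using poly_horz[of 1 "-1"] poly_vert[of 1 "-1"] by (simp_all add: horz_1 vert_1)
  then have vert_horz_minus_1: "vert (-1) = 0" "horz (-1) = 0"
    by (auto intro!: poly_eq_0_if_vanishes_on_gauss_pts[OF deg_vert, of _ 1]
        poly_eq_0_if_vanishes_on_gauss_pts[OF deg_horz, of _ 1] simp: poly_vert poly_horz gauss)
  show ?thesis
    using edge vert_1 horz_1 vert_horz_minus_1 poly_vert[of x y] poly_horz[of y x] by auto
qed

lemma poly2_zero_if_vanishes_on_admissible_I:
  fixes Q :: "real poly poly"
  assumes adm: "admissible_I k I"
    and supp: "\<And>i j. coeff (coeff Q i) j \<noteq> 0 \<Longrightarrow> i + j + 4 \<le> 2 * k"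
    and zero: "\<And>z. z \<in> I \<Longrightarrow> poly2 Q z = 0"
  shows "poly2 Q = (\<lambda>_. 0)"
proof (cases "k = 1")
  case True
  then have "Q = 0"
    using supp by (fastforce intro!: poly_eqI)
  then show ?thesis
    by (simp add: poly2_def fun_eq_iff)
next
  case False
  have "poly2 Q \<in> P2 (2 * k - 4)"
    using supp by (intro poly2_in_P2) fastforce
  moreover have "(\<lambda>_. 0) \<in> P2 (2 * k - 4)"
    unfolding P2_def by (rule CollectI, rule exI[of _ "\<lambda>_ _. 0"]) auto
  ultimately show ?thesis
    using adm False zero unfolding admissible_I_def by auto
qed

lemma poly2_cofactor_zero_on_admissible_I:
  fixes Q :: "real poly poly"
  assumes "admissible_I k I" "z \<in> I" "poly2 ([:-1, 0, 1:] * smult [:-1, 0, 1:] Q) z = 0"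
  shows "poly2 Q z = 0"
proof -
  obtain x y where z: "z = (x, y)"
    by force
  then have "-1 < x \<and> x < 1 \<and> -1 < y \<and> y < 1"
    using assms(1,2) unfolding admissible_I_def by (auto split: if_splits)
  then have "x\<^sup>2 - 1 \<noteq> 0" "y\<^sup>2 - 1 \<noteq> 0"
    by (auto simp: power2_eq_1_iff)
  moreover have "(x\<^sup>2 - 1) * (y\<^sup>2 - 1) * poly2 Q (x, y) = 0"
    using assms(3) z by (simp only: poly2_boundary_factor_eq)
  ultimately show ?thesis
    using z by simp
qed

theorem mainTheorem6:
  fixes k :: nat and I :: "(real \<times> real) set" and v :: "real \<times> real \<Rightarrow> real"
  assumes "k \<ge> 1"
    and "admissible_I k I"
    and "v \<in> Rplus (2 * k)"
    and "\<forall>z \<in> Gplus k \<union> I \<union> {(1, 1)}. v z = 0"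
  shows "v = (\<lambda>_. 0)"
proof -
  obtain V where v: "v = poly2 V"
    and supp: "\<And>i j. coeff (coeff V i) j \<noteq> 0 \<Longrightarrow>
      i + j \<le> 2 * k \<or> (i, j) = (2 * k, 1) \<or> (i, j) = (1, 2 * k)"
    using Rplus_poly2E[OF assms(3)] by blast
  have "degree V \<le> 2 * k" "degree (coeff V i) \<le> 2 * k" for i
    using supp assms(1) by (fastforce intro!: degree_le poly_eqI)+
  then have "poly2 V (x, y) = 0" if "x \<in> {-1, 1} \<or> y \<in> {-1, 1}" for x y
    using poly2_zero_on_square_boundary that assms(4) v by blast
  then obtain Q where VQ: "V = [:-1, 0, 1:] * smult [:-1, 0, 1:] Q"
    using poly2_boundary_factorE by blast
  have vQ: "v (x, y) = (x\<^sup>2 - 1) * (y\<^sup>2 - 1) * poly2 Q (x, y)" for x y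
    by (simp only: v VQ poly2_boundary_factor_eq)
  have "poly2 Q = (\<lambda>_. 0)"
  proof (rule poly2_zero_if_vanishes_on_admissible_I[OF assms(2)])
    show "i + j + 4 \<le> 2 * k" if "coeff (coeff Q i) j \<noteq> 0" for i j
      using boundary_factor_total_degree[OF supp[unfolded VQ] that] .
    show "poly2 Q z = 0" if "z \<in> I" for z
    proof (rule poly2_cofactor_zero_on_admissible_I[OF assms(2) that])
      have "v z = 0"
        using assms(4) that by blast
      then show "poly2 ([:-1, 0, 1:] * smult [:-1, 0, 1:] Q) z = 0"
        by (simp only: v VQ)
    qed
  qed
  then show ?thesis
    by (simp add: fun_eq_iff vQ)
qed

end
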